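(* Let us denote by $x_c(x)$ the abscissa of the first collision point of the trajectory starting from $x \in \Sigma$ with the upper boundary of $\hat{D}$. For all $x \in \Sigma$ such that $\alpha(x_c(x))$ is defined, we have \begin{displaymath} f'(x) = \frac{\sin(\theta + \alpha(x_c(x)))}{\sin(\theta-\alpha(x_c(x)))} . \end{displaymath}
   Context: Setting: an internal-wave billiard (a point particle moving at unit speed in a planar table, reflected so that the angles of incident and reflected velocities with the vertical are equal) in a table $D$ of height $1/2$ with horizontal bases, a vertical left side, and right side the graph of a piecewise $C^1$, strictly decreasing, concave function (possibly plus a vertical segment attached to its lower end). The dynamics is unfolded to a linear flow of unit speed and fixed direction $\theta$ (angle with the vertical) on $\hat{D}\subset\mathbb{R}^2$, a 4-fold copy of $D$, whose upper boundary is the graph of an even function $b:[-1/2,1/2]\to\mathbb{R}^+$ that is piecewise $C^1$, concave, and non-increasing on $[0,1/2]$, the lower boundary being its mirror image; opposite boundary points (same abscissa on upper/lower boundary, same ordinate on left/right boundary) are identified. Set $\alpha(x):=\arctan(b'(x))$ (defined except at countably many points), with $\alpha(-1/2)=\alpha_M$, $\alpha(1/2)=-\alpha_M$. The direction satisfies $\theta\in(\alpha_M,\pi/2)$. $\Sigma$ is a horizontal segment of length $1$ spanning $\hat D$ (a cross-section, topologically a circle after the identifications), and $f:\Sigma\to\Sigma$ is the first-return (Poincaré) map of the linear flow; between consecutive returns a trajectory hits the upper boundary once and continues from the opposite point of the lower boundary. *)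

theory Defs
  imports "HOL-Analysis.Analysis"
begin

text \<open>Reduction of an abscissa to the fundamental domain [-1/2,1/2) of the
cross-section \<Sigma> (a circle of length 1 after the identifications).\<close>
definition red :: "real \<Rightarrow> real" where
  "red y = y - of_int \<lfloor>y + 1/2\<rfloor>"

text \<open>Upper boundary of the unfolded table, extended 1-periodically in x
(this encodes the identification of the left and right boundaries).\<close>
definition bper :: "(real \<Rightarrow> real) \<Rightarrow> real \<Rightarrow> real" where
  "bper b y = b (red y)"

text \<open>Time of the first collision with the upper boundary of the linear flow
with velocity (cos \<theta>, sin \<theta>) started at the point (x,0) of \<Sigma>.\<close>
definition coll_time :: "(real \<Rightarrow> real) \<Rightarrow> real \<Rightarrow> real \<Rightarrow> real" where
  "coll_time b \<theta> x = Inf {t. 0 \<le> t \<and> bper b (x + t * cos \<theta>) \<le> t * sin \<theta>}"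

text \<open>Abscissa of the first collision point (on the covering line, and reduced to \<Sigma>).\<close>
definition xc_lift :: "(real \<Rightarrow> real) \<Rightarrow> real \<Rightarrow> real \<Rightarrow> real" where
  "xc_lift b \<theta> x = x + coll_time b \<theta> x * cos \<theta>"

definition xc :: "(real \<Rightarrow> real) \<Rightarrow> real \<Rightarrow> real \<Rightarrow> real" where
  "xc b \<theta> x = red (xc_lift b \<theta> x)"

text \<open>Lift of the first-return map: after hitting the upper boundary at abscissa X
the trajectory continues from the opposite point (X, -b X) of the lower boundary
and returns to \<Sigma> (y = 0) at abscissa X + b X cot \<theta>.\<close>
definition f_lift :: "(real \<Rightarrow> real) \<Rightarrow> real \<Rightarrow> real \<Rightarrow> real" where
  "f_lift b \<theta> x = xc_lift b \<theta> x + bper b (xc_lift b \<theta> x) * cos \<theta> / sin \<theta>"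

definition poincare :: "(real \<Rightarrow> real) \<Rightarrow> real \<Rightarrow> real \<Rightarrow> real" where
  "poincare b \<theta> x = red (f_lift b \<theta> x)"

definition alpha :: "(real \<Rightarrow> real) \<Rightarrow> real \<Rightarrow> real" where
  "alpha b X = arctan (deriv (bper b) X)"

end

theory Submission
  imports Defs
begin

text \<open>A concave even function with right derivative bd at -1/2 is bd-Lipschitz, and so is
its periodic extension bper b. The trajectory from x first hits the upper boundary above the point X
with x = launch X = X - bper b X cot \<theta>. Since bd < tan \<theta>, launch is an increasing bi-Lipschitz
homeomorphism of the line, so x_c is its inverse and f(x) = 2 x_c(x) - x. The inverse function
theorem gives f'(x) = 2 / (1 - b'(X) cot \<theta>) - 1 = sin(\<theta> + \<alpha>) / sin(\<theta> - \<alpha>).\<close>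

lemma concave_on_slope_le:
  fixes f :: "real \<Rightarrow> real"
  assumes "concave_on I f" "x \<in> I" "y \<in> I" "x < t" "t < y"
  shows "(f y - f x) / (y - x) \<le> (f t - f x) / (t - x)"
    and "(f y - f t) / (y - t) \<le> (f y - f x) / (y - x)"
proof -
  have neg_slope: "(- f u - - f v) / (u - v) = - ((f v - f u) / (v - u))" for u v
    by (simp add: divide_simps algebra_simps)
  have "convex_on I (\<lambda>x. - f x)"
    using assms(1) by (simp add: concave_on_def)
  from convex_on_slope_le[OF this assms(2-5)]
  show "(f y - f x) / (y - x) \<le> (f t - f x) / (t - x)"
    and "(f y - f t) / (y - t) \<le> (f y - f x) / (y - x)"
    unfolding neg_slope by simp_all
qed

lemma concave_on_diff_le_right_deriv:
  fixes f :: "real \<Rightarrow> real"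
  assumes conc: "concave_on {a..c} f" and der: "(f has_real_derivative D) (at_right a)"
    and uv: "a \<le> u" "u \<le> v" "v \<le> c"
  shows "f v - f u \<le> D * (v - u)"
proof -
  have slope_from_a: "(f w - f a) / (w - a) \<le> D" if w: "a < w" "w \<le> c" for w
  proof (rule tendsto_lowerbound)
    show "((\<lambda>s. (f s - f a) / (s - a)) \<longlongrightarrow> D) (at_right a)"
      using der by (simp add: has_field_derivative_iff)
    show "\<forall>\<^sub>F s in at_right a. (f w - f a) / (w - a) \<le> (f s - f a) / (s - a)"
      unfolding eventually_at_right_field
      using w by (intro exI[of _ w]) (auto intro: concave_on_slope_le(1)[OF conc])
  qed simp
  show ?thesis
  proof (cases "u < v")
    case True
    have "(f v - f u) / (v - u) \<le> (f v - f a) / (v - a)"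
      using concave_on_slope_le(2)[OF conc, of a v u] uv True
      by (cases "u = a") auto
    also have "\<dots> \<le> D"
      using slope_from_a uv True by simp
    finally show ?thesis
      using True by (simp add: divide_le_eq)
  qed (use uv in simp)
qed

lemma even_concave_on_lipschitz:
  fixes f :: "real \<Rightarrow> real"
  assumes conc: "concave_on {-a..a} f" and even: "\<forall>y\<in>{-a..a}. f (-y) = f y"
    and der: "(f has_real_derivative D) (at_right (-a))" and a: "0 < a"
  shows "D-lipschitz_on {-a..a} f"
proof (rule lipschitz_on_leI)
  fix u v assume uv: "u \<in> {-a..a}" "v \<in> {-a..a}" "u \<le> v"
  have "f v - f u \<le> D * (v - u)"
    using concave_on_diff_le_right_deriv[OF conc der] uv by simp
  moreover have "f (-u) - f (-v) \<le> D * (-u - -v)"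
    using concave_on_diff_le_right_deriv[OF conc der, of "-v" "-u"] uv by simp
  ultimately show "dist (f u) (f v) \<le> D * dist u v"
    using even uv by (simp add: dist_real_def abs_le_iff)
next
  have "f a - f (-a) \<le> D * (a - -a)"
    using concave_on_diff_le_right_deriv[OF conc der, of "-a" a] a by simp
  then show "0 \<le> D"
    using even a by (simp add: zero_le_mult_iff)
qed

lemma lipschitz_on_UNIV_if_periodic:
  fixes f :: "real \<Rightarrow> real"
  assumes periodic: "\<And>y k. f (y + of_int k) = f y"
    and lip: "L-lipschitz_on {a..a+1} f"
  shows "L-lipschitz_on UNIV f"
proof (rule lipschitz_on_leI)
  have "L-lipschitz_on {a+1..a+2} f"
  proof (rule lipschitz_onI)
    fix y z assume "y \<in> {a+1..a+2}" "z \<in> {a+1..a+2}"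
    then show "dist (f y) (f z) \<le> L * dist y z"
      using lipschitz_onD[OF lip, of "y + of_int (-1)" "z + of_int (-1)"] periodic[of _ "-1"]
      by (simp add: dist_real_def)
  qed (rule lipschitz_on_nonneg[OF lip])
  from lipschitz_on_concat[OF lip this]
  have two_periods: "L-lipschitz_on {a..a+2} f"
    by simp
  fix y z :: real assume "y \<le> z"
  \<comment> \<open>Translate y into [a, a+1) and z to within one period above it; this can only
    shorten the distance.\<close>
  define n m where "n = \<lfloor>y - a\<rfloor>" and "m = \<lfloor>z - y\<rfloor>"
  define y' z' where "y' = y + of_int (-n)" and "z' = z + of_int (- n - m)"
  have y': "a \<le> y'" "y' < a + 1" and z': "0 \<le> z' - y'" "z' - y' < 1"
    using floor_correct[of "y - a"] floor_correct[of "z - y"]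
    unfolding y'_def z'_def n_def m_def by (simp_all, linarith+)
  have "dist (f y') (f z') \<le> L * dist y' z'"
    using y' z' by (intro lipschitz_onD[OF two_periods]) auto
  also have "\<dots> \<le> L * dist y z"
  proof (intro mult_left_mono)
    have "0 \<le> m"
      using \<open>y \<le> z\<close> unfolding m_def by simp
    then show "dist y' z' \<le> dist y z"
      using z' \<open>y \<le> z\<close> unfolding dist_real_def y'_def z'_def by simp
  qed (rule lipschitz_on_nonneg[OF lip])
  finally show "dist (f y) (f z) \<le> L * dist y z"
    unfolding y'_def z'_def periodic .
qed (rule lipschitz_on_nonneg[OF lip])

lemma red_add_of_int: "red (y + of_int k) = red y"
proof -
  have "\<lfloor>y + of_int k + 1/2\<rfloor> = \<lfloor>y + 1/2\<rfloor> + k"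
    by (metis add.commute add.left_commute floor_add_int)
  then show ?thesis
    unfolding red_def by simp
qed

lemma bper_add_of_int: "bper b (y + of_int k) = bper b y"
  unfolding bper_def by (simp add: red_add_of_int)

lemma red_mem: "red y \<in> {-1/2..<1/2}"
  unfolding red_def using floor_correct[of "y + 1/2"] by (auto simp: field_simps)

lemma bper_eq_self:
  assumes "b (-1/2) = b (1/2)" "y \<in> {-1/2..1/2}"
  shows "bper b y = b y"
proof (cases "y = 1/2")
  case True
  have "red y = -1/2"
    unfolding True red_def by simp
  then show ?thesis
    using assms(1) unfolding True bper_def by simp
next
  case False
  then have "\<lfloor>y + 1/2\<rfloor> = 0"
    using assms(2) by (intro floor_unique) auto
  then show ?thesis
    by (simp add: bper_def red_def)
qed

lemma lipschitz_on_bper: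
  assumes "b (-1/2) = b (1/2)" and "L-lipschitz_on {-1/2..1/2} b"
  shows "L-lipschitz_on UNIV (bper b)"
proof (rule lipschitz_on_UNIV_if_periodic[where a = "-1/2"])
  have "L-lipschitz_on {-1/2..1/2} (bper b) \<longleftrightarrow> L-lipschitz_on {-1/2..1/2} b"
    using assms(1) by (intro lipschitz_on_cong) (simp_all add: bper_eq_self)
  then show "L-lipschitz_on {-1/2..-1/2+1} (bper b)"
    using assms(2) by simp
qed (rule bper_add_of_int)

lemma bper_has_real_derivative_red:
  assumes "(bper b has_real_derivative d) (at (red y))"
  shows "(bper b has_real_derivative d) (at y)"
proof -
  have "red y = y + of_int (- \<lfloor>y + 1/2\<rfloor>)"
    by (simp add: red_def)
  then have "((\<lambda>z. bper b (z + of_int (- \<lfloor>y + 1/2\<rfloor>))) has_real_derivative d) (at y)"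
    using assms by (simp only: DERIV_shift)
  then show ?thesis
    by (simp only: bper_add_of_int)
qed

lemma lipschitz_on_has_real_derivative_abs_le:
  fixes f :: "real \<Rightarrow> real"
  assumes lip: "L-lipschitz_on S f" and "open S" "y \<in> S"
    and der: "(f has_real_derivative d) (at y)"
  shows "\<bar>d\<bar> \<le> L"
proof (rule tendsto_upperbound)
  show "((\<lambda>z. \<bar>(f z - f y) / (z - y)\<bar>) \<longlongrightarrow> \<bar>d\<bar>) (at y)"
    using der by (intro tendsto_rabs) (simp add: has_field_derivative_iff)
  have "\<forall>\<^sub>F z in at y. z \<in> S - {y}"
    using \<open>open S\<close> \<open>y \<in> S\<close> by (rule eventually_at_in_open)
  then show "\<forall>\<^sub>F z in at y. \<bar>(f z - f y) / (z - y)\<bar> \<le> L"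
  proof eventually_elim
    case (elim z)
    then show ?case
      using lipschitz_onD[OF lip, of z y] \<open>y \<in> S\<close>
      by (simp add: dist_real_def abs_divide divide_le_eq)
  qed
qed simp

lemma sin_add_arctan_divide_sin_diff_arctan:
  "sin (\<theta> + arctan d) / sin (\<theta> - arctan d) = (sin \<theta> + d * cos \<theta>) / (sin \<theta> - d * cos \<theta>)"
proof -
  define q where "q = sqrt (1 + d\<^sup>2)"
  have "0 < q"
    unfolding q_def by (simp add: add_pos_nonneg)
  moreover have "sin (\<theta> + arctan d) = (sin \<theta> + d * cos \<theta>) / q"
    by (simp add: sin_add cos_arctan sin_arctan q_def add_divide_distrib)
  moreover have "sin (\<theta> - arctan d) = (sin \<theta> - d * cos \<theta>) / q"
    by (simp add: sin_diff cos_arctan sin_arctan q_def diff_divide_distrib)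
  ultimately show ?thesis
    by simp
qed

definition launch :: "(real \<Rightarrow> real) \<Rightarrow> real \<Rightarrow> real \<Rightarrow> real" where
  "launch b \<theta> X = X - bper b X * cos \<theta> / sin \<theta>"

lemma launch_eq_cot: "launch b \<theta> X = X - bper b X * cot \<theta>"
  by (simp add: launch_def cot_def)

locale steep_flow =
  fixes b :: "real \<Rightarrow> real" and \<theta> L :: real
  assumes lipschitz: "L-lipschitz_on UNIV (bper b)"
    and height_pos: "\<And>y. 0 < bper b y"
    and cos_pos: "0 < cos \<theta>"
    and steep: "L * cos \<theta> < sin \<theta>"
begin

lemma sin_pos: "0 < sin \<theta>"
  using steep mult_nonneg_nonneg[OF lipschitz_on_nonneg[OF lipschitz] less_imp_le[OF cos_pos]]
  by linarith

lemma cot_pos: "0 < cot \<theta>"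
  using cos_pos sin_pos by (simp add: cot_def)

lemma lipschitz_cot_less_one: "L * cot \<theta> < 1"
  using steep sin_pos by (simp add: cot_def field_simps)

lemma derivative_cot_less_one:
  assumes "(bper b has_real_derivative d) (at y)"
  shows "d * cot \<theta> < 1"
proof -
  have "d \<le> L"
    using lipschitz_on_has_real_derivative_abs_le[OF lipschitz _ _ assms] by simp
  then show ?thesis
    using lipschitz_cot_less_one mult_right_mono[OF _ less_imp_le[OF cot_pos]] by fastforce
qed

lemma launch_diff_ge:
  assumes "y \<le> z"
  shows "(1 - L * cot \<theta>) * (z - y) \<le> launch b \<theta> z - launch b \<theta> y"
proof -
  have "bper b z - bper b y \<le> L * (z - y)"
    using lipschitz_onD[OF lipschitz, of z y] assms by (simp add: dist_real_def)
  then have "(bper b z - bper b y) * cot \<theta> \<le> L * (z - y) * cot \<theta>"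
    using cot_pos by (intro mult_right_mono) auto
  moreover have "launch b \<theta> z - launch b \<theta> y = (z - y) - (bper b z - bper b y) * cot \<theta>"
    by (simp add: launch_eq_cot algebra_simps)
  moreover have "(1 - L * cot \<theta>) * (z - y) = (z - y) - L * (z - y) * cot \<theta>"
    by (simp add: algebra_simps)
  ultimately show ?thesis
    by linarith
qed

lemma launch_less: "y < z \<Longrightarrow> launch b \<theta> y < launch b \<theta> z"
  using launch_diff_ge[of y z] mult_pos_pos[of "1 - L * cot \<theta>" "z - y"] lipschitz_cot_less_one
  by linarith

lemma continuous_on_launch: "continuous_on UNIV (launch b \<theta>)"
  unfolding launch_eq_cot[abs_def]
  by (intro continuous_intros lipschitz_on_continuous_on[OF lipschitz])

lemma surj_launch: "surj (launch b \<theta>)"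
proof -
  have "\<exists>X. launch b \<theta> X = x" for x
  proof -
    define t where "t = (x - launch b \<theta> x) / (1 - L * cot \<theta>)"
    have below: "launch b \<theta> x \<le> x"
      using height_pos[of x] cot_pos by (simp add: launch_eq_cot)
    then have "0 \<le> t"
      using lipschitz_cot_less_one unfolding t_def by simp
    moreover have "(1 - L * cot \<theta>) * t = x - launch b \<theta> x"
      using lipschitz_cot_less_one unfolding t_def by simp
    ultimately have "x \<le> launch b \<theta> (x + t)"
      using launch_diff_ge[of x "x + t"] by (simp only: add_diff_cancel_left') linarith
    with below \<open>0 \<le> t\<close> show ?thesis
      using IVT'[of "launch b \<theta>" x x "x + t"] continuous_on_subset[OF continuous_on_launch]
      by auto
  qed
  then show ?thesis
    by (metis surj_def)
qed

lemma xc_lift_launch: "xc_lift b \<theta> (launch b \<theta> X) = X"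
proof -
  define x T where "x = launch b \<theta> X" and "T = (X - x) / cos \<theta>"
  have hit: "x + T * cos \<theta> = X" "bper b X = T * sin \<theta>"
    using cos_pos sin_pos unfolding T_def x_def launch_def by (simp_all add: field_simps)
  have "coll_time b \<theta> x = T"
    unfolding coll_time_def
  proof (rule cInf_eq_minimum)
    have "0 < T * sin \<theta>"
      using hit height_pos[of X] by simp
    then have "0 \<le> T"
      using sin_pos by (simp add: zero_less_mult_iff)
    then show "T \<in> {t. 0 \<le> t \<and> bper b (x + t * cos \<theta>) \<le> t * sin \<theta>}"
      using hit by simp
  next
    fix t assume "t \<in> {t. 0 \<le> t \<and> bper b (x + t * cos \<theta>) \<le> t * sin \<theta>}"
    then have "bper b (x + t * cos \<theta>) \<le> t * sin \<theta>"
      by simp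
    then have "x \<le> launch b \<theta> (x + t * cos \<theta>)"
      using cos_pos sin_pos by (simp add: launch_def field_simps)
    then have "\<not> x + t * cos \<theta> < X"
      using launch_less unfolding x_def by fastforce
    then have "T * cos \<theta> \<le> t * cos \<theta>"
      using hit(1) by linarith
    then show "T \<le> t"
      using cos_pos by simp
  qed
  then show ?thesis
    using hit(1) unfolding x_def xc_lift_def by simp
qed

lemma launch_xc_lift: "launch b \<theta> (xc_lift b \<theta> x) = x"
  using surj_launch xc_lift_launch by (metis surjD)

lemma f_lift_eq: "f_lift b \<theta> x = 2 * xc_lift b \<theta> x - x"
  using launch_xc_lift[of x] by (simp add: f_lift_def launch_def)

lemma lipschitz_xc_lift: "(1 / (1 - L * cot \<theta>))-lipschitz_on UNIV (xc_lift b \<theta>)"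
proof (rule lipschitz_on_leI)
  fix x y :: real assume "x \<le> y"
  then have mono: "xc_lift b \<theta> x \<le> xc_lift b \<theta> y"
    by (metis launch_less launch_xc_lift not_le)
  have "(1 - L * cot \<theta>) * (xc_lift b \<theta> y - xc_lift b \<theta> x) \<le> y - x"
    using launch_diff_ge[OF mono] by (simp add: launch_xc_lift)
  then have "xc_lift b \<theta> y - xc_lift b \<theta> x \<le> (y - x) / (1 - L * cot \<theta>)"
    using lipschitz_cot_less_one by (simp add: le_divide_eq mult.commute)
  then show "dist (xc_lift b \<theta> x) (xc_lift b \<theta> y) \<le> 1 / (1 - L * cot \<theta>) * dist x y"
    using mono \<open>x \<le> y\<close> by (simp add: dist_real_def)
qed (use lipschitz_cot_less_one in simp)

lemma xc_lift_has_real_derivative: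
  assumes der: "(bper b has_real_derivative d) (at (xc_lift b \<theta> x))"
  shows "(xc_lift b \<theta> has_real_derivative inverse (1 - d * cot \<theta>)) (at x)"
proof (rule DERIV_inverse_function[where a = "x - 1" and b = "x + 1"])
  show "(launch b \<theta> has_real_derivative 1 - d * cot \<theta>) (at (xc_lift b \<theta> x))"
    unfolding launch_eq_cot[abs_def] by (auto intro!: derivative_eq_intros der)
  show "1 - d * cot \<theta> \<noteq> 0"
    using derivative_cot_less_one[OF der] by linarith
  show "isCont (xc_lift b \<theta>) x"
    using lipschitz_on_continuous_on[OF lipschitz_xc_lift]
    by (simp add: continuous_on_eq_continuous_at)
qed (auto simp: launch_xc_lift)

lemma f_lift_has_real_derivative:
  assumes der: "(bper b has_real_derivative d) (at (xc_lift b \<theta> x))"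
  shows "(f_lift b \<theta> has_real_derivative sin (\<theta> + arctan d) / sin (\<theta> - arctan d)) (at x)"
proof -
  have "2 * inverse (1 - d * cot \<theta>) - 1 = sin (\<theta> + arctan d) / sin (\<theta> - arctan d)"
    using derivative_cot_less_one[OF der] sin_pos
    by (simp add: sin_add_arctan_divide_sin_diff_arctan cot_def field_simps)
  moreover have "(f_lift b \<theta> has_real_derivative 2 * inverse (1 - d * cot \<theta>) - 1) (at x)"
    unfolding f_lift_eq[abs_def]
    by (auto intro!: derivative_eq_intros xc_lift_has_real_derivative[OF der])
  ultimately show ?thesis
    by simp
qed

end

lemma steep_flow_concave_table:
  fixes b :: "real \<Rightarrow> real"
  assumes conc: "concave_on {-1/2..1/2} b"
    and pos: "\<forall>y\<in>{-1/2..1/2}. b y > 0"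
    and even: "\<forall>y\<in>{-1/2..1/2}. b (-y) = b y"
    and der: "(b has_real_derivative bd) (at_right (-1/2))"
    and "arctan bd < \<theta>" "\<theta> < pi/2"
  shows "steep_flow b \<theta> bd"
proof
  have lip: "bd-lipschitz_on {-1/2..1/2} b"
    using even_concave_on_lipschitz[of "1/2" b bd] conc even der by simp
  then show "bd-lipschitz_on UNIV (bper b)"
    using even by (intro lipschitz_on_bper) auto
  show "0 < bper b y" for y
    using pos red_mem[of y] by (auto simp: bper_def)
  have "0 \<le> arctan bd"
    using lipschitz_on_nonneg[OF lip] by (simp add: zero_le_arctan_iff)
  then have range: "-(pi/2) < \<theta>" "\<theta> < pi/2"
    using \<open>arctan bd < \<theta>\<close> \<open>\<theta> < pi/2\<close> pi_gt_zero by linarith+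
  then show "0 < cos \<theta>"
    by (rule cos_gt_zero_pi)
  have "arctan bd < arctan (tan \<theta>)"
    using \<open>arctan bd < \<theta>\<close> by (simp only: arctan_tan[OF range])
  then have "bd < tan \<theta>"
    by (simp only: arctan_less_iff)
  with \<open>0 < cos \<theta>\<close> show "bd * cos \<theta> < sin \<theta>"
    by (simp add: tan_def field_simps)
qed

theorem lemma2p1:
  fixes b :: "real \<Rightarrow> real" and \<theta> bd x :: real
  assumes "b piecewise_C1_differentiable_on {-1/2..1/2}"
    and "concave_on {-1/2..1/2} b"
    and "\<forall>y\<in>{-1/2..1/2}. b y > 0"
    and "\<forall>y\<in>{-1/2..1/2}. b (-y) = b y"
    and "\<forall>y z. 0 \<le> y \<longrightarrow> y \<le> z \<longrightarrow> z \<le> 1/2 \<longrightarrow> b z \<le> b y"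
    and "(b has_real_derivative bd) (at_right (-1/2))"
    and "arctan bd < \<theta>" and "\<theta> < pi/2"
    and "x \<in> {-1/2..<1/2}"
    and "bper b differentiable (at (xc b \<theta> x))"
  shows "(f_lift b \<theta> has_real_derivative
            sin (\<theta> + alpha b (xc b \<theta> x)) / sin (\<theta> - alpha b (xc b \<theta> x))) (at x)"
proof -
  interpret steep_flow b \<theta> bd
    using assms(2-4,6-8) by (rule steep_flow_concave_table)
  have "(bper b has_real_derivative deriv (bper b) (xc b \<theta> x)) (at (red (xc_lift b \<theta> x)))"
    using assms(10) by (simp add: xc_def DERIV_deriv_iff_real_differentiable)
  then have "(bper b has_real_derivative deriv (bper b) (xc b \<theta> x)) (at (xc_lift b \<theta> x))"
    by (rule bper_has_real_derivative_red)
  from f_lift_has_real_derivative[OF this] show ?thesis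
    unfolding alpha_def .
qed

end
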